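(* Let $m\ge1$ and $k\ge0$ be integers. Then for every $n\in[km,(k+1)m)$ and $l\in\{1,\dots,d\}$, $$\mathcal D(\mathfrak x^l_n)\le\mathcal D(\mathfrak x^l_0)\big(1+\mathcal H^l_{[km,n)}\big)\prod_{s=1}^k\Big(1-\gamma(1-\gamma)^{m-1}\mathcal G_{[(s-1)m,sm)}+\mathcal H^l_{[(s-1)m,sm)}\Big),$$ with the convention $\mathcal H^l_{[km,km)}=0$.
   Context: Setting (random batch CBO). Fix integers $N\ge2$, $d\ge1$, batch size $P\ge2$, drift $\gamma\in(0,1)$, noise level $\zeta\ge0$; $\mathcal N=\{1,\dots,N\}$. Weight functions $\omega_{S,j}:(\mathbb R^d)^N\to[0,\infty)$ for nonempty $S\subseteq\mathcal N$, $j\in\mathcal N$, with $\sum_{j\in S}\omega_{S,j}=1$ and $\omega_{S,j}=0$ for $j\notin S$. $\mathcal A$ is the set of partitions of $\mathcal N$ into $\lceil N/P\rceil$ batches, all of size $P$ except possibly one of size at most $P$; $(\mathcal B^n)_{n\ge0}$ i.i.d. uniform on $\mathcal A$; $[i]_n$ is the batch of $\mathcal B^n$ containing $i$. Noise arrays $(\eta^{i,l}_n)_{i,l}$ are i.i.d. in $n$ with $\mathbb E\eta^{i,l}_n=0$, $\mathbb E|\eta^{i,l}_n|^2\le\zeta^2$; initial data, batches, and noises are mutually independent. The dynamics is $\mathbf x^i_{n+1}=\mathbf x^i_n-\gamma(\mathbf x^i_n-\bar{\mathbf x}^{[i]_n,*}_n)-\sum_{l=1}^d(x^{i,l}_n-\bar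 x^{[i]_n,*,l}_n)\eta^{i,l}_n\mathbf e_l$ with $\bar{\mathbf x}^{S,*}_n=\sum_j\omega_{S,j}(X_n)\mathbf x^j_n$, $X_n=(\mathbf x^1_n,\dots,\mathbf x^N_n)$. Let $\mathfrak x^l_n:=(x^{1,l}_n,\dots,x^{N,l}_n)^\top$, $\mathcal D(\mathbf z):=\max_iz_i-\min_iz_i$, $H^l_n:=\mathrm{diag}(\eta^{1,l}_n,\dots,\eta^{N,l}_n)$, $\|A\|_{1,\infty}:=\max_i\sum_j|a_{ij}|$. For $n\ge0$, $m\ge1$: $\mathcal G_{[n,n+m)}:=\min_{i,j}|\{r:n\le r<n+m,[i]_r=[j]_r\}|$ and $\mathcal H^l_{[n,n+m)}:=2\big[\prod_{r=n}^{n+m-1}(1+2\|H^l_r\|_{1,\infty})-1\big]$. *)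

theory Defs
  imports "HOL-Analysis.Analysis" "HOL-Library.Disjoint_Sets"
begin

text \<open>Particles are indexed by 1..N, coordinates by 1..d.\<close>

definition batch_partitions :: "nat \<Rightarrow> nat \<Rightarrow> nat set set set" where
  "batch_partitions N P = {B. partition_on {1..N} B
      \<and> card B = nat \<lceil>real N / real P\<rceil>
      \<and> (\<forall>S\<in>B. card S \<le> P)
      \<and> (\<exists>S0\<in>B. \<forall>S\<in>B - {S0}. card S = P)}"

definition batch_of :: "nat set set \<Rightarrow> nat \<Rightarrow> nat set" where
  "batch_of B i = (THE S. S \<in> B \<and> i \<in> S)"

definition diam :: "nat \<Rightarrow> (nat \<Rightarrow> real) \<Rightarrow> real" where
  "diam N z = (MAX i\<in>{1..N}. z i) - (MIN i\<in>{1..N}. z i)"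

definition norm_1inf :: "nat \<Rightarrow> (nat \<Rightarrow> nat \<Rightarrow> real) \<Rightarrow> real" where
  "norm_1inf N A = (MAX i\<in>{1..N}. \<Sum>j\<in>{1..N}. \<bar>A i j\<bar>)"

definition Hmat :: "(nat \<Rightarrow> nat \<Rightarrow> nat \<Rightarrow> real) \<Rightarrow> nat \<Rightarrow> nat \<Rightarrow> nat \<Rightarrow> nat \<Rightarrow> real" where
  "Hmat eta l r = (\<lambda>i j. if i = j then eta r i l else 0)"

definition Gcount :: "nat \<Rightarrow> (nat \<Rightarrow> nat set set) \<Rightarrow> nat \<Rightarrow> nat \<Rightarrow> nat" where
  "Gcount N B a b = (MIN p\<in>{1..N} \<times> {1..N}.
      card {r\<in>{a..<b}. batch_of (B r) (fst p) = batch_of (B r) (snd p)})"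

definition Hcoef :: "nat \<Rightarrow> (nat \<Rightarrow> nat \<Rightarrow> nat \<Rightarrow> real) \<Rightarrow> nat \<Rightarrow> nat \<Rightarrow> nat \<Rightarrow> real" where
  "Hcoef N eta l a b = 2 * ((\<Prod>r\<in>{a..<b}. 1 + 2 * norm_1inf N (Hmat eta l r)) - 1)"

end

theory Submission
  imports Defs
begin

text \<open>In a fixed coordinate the update is the lazy averaging step \<open>(1 - \<gamma>) I + \<gamma> A_r\<close> with a
  row-stochastic batch matrix \<open>A_r\<close>, perturbed by a noise term of size at most
  \<open>\<parallel>H_r\<parallel> \<cdot> D\<close>. Over a block of \<open>t\<close> steps the noiseless propagator dominates
  \<open>\<gamma> (1 - \<gamma>)^(t-1) \<Sum>_r A_r\<close>; for two particles the terms with \<open>[i]_r = [k]_r\<close> are common to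
  both rows and have total mass \<open>\<gamma> (1 - \<gamma>)^(t-1) G\<close>, so Dobrushin's coupling bound
  contracts the diameter of the noiseless trajectory by \<open>1 - \<gamma> (1 - \<gamma>)^(t-1) G\<close>.
  The noise grows the diameter by at most \<open>1 + 2 \<parallel>H_r\<parallel>\<close> per step, which keeps the true
  trajectory within \<open>(\<Prod>(1 + 2 \<parallel>H_r\<parallel>) - 1) D\<close> of the noiseless one; this gives the
  factor for one block, and the theorem follows by chaining blocks of length \<open>m\<close>.\<close>

lemma diam_le:
  assumes "N \<ge> 1" and "\<And>i k. i \<in> {1..N} \<Longrightarrow> k \<in> {1..N} \<Longrightarrow> z i - z k \<le> C"
  shows "diam N z \<le> C"
proof -
  have fin: "finite (z ` {1..N})" and ne: "z ` {1..N} \<noteq> {}"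
    using assms(1) by auto
  obtain i where "i \<in> {1..N}" "z i = Max (z ` {1..N})" using Max_in[OF fin ne] by auto
  moreover obtain k where "k \<in> {1..N}" "z k = Min (z ` {1..N})" using Min_in[OF fin ne] by auto
  ultimately show ?thesis
    unfolding diam_def using assms(2) by fastforce
qed

lemma diam_nonneg: "N \<ge> 1 \<Longrightarrow> 0 \<le> diam N z"
proof -
  assume "N \<ge> 1"
  then have "z 1 \<le> Max (z ` {1..N})" "Min (z ` {1..N}) \<le> z 1"
    by (auto intro!: Max_ge Min_le)
  then show ?thesis
    unfolding diam_def by linarith
qed

lemma sum_mult_le_sum_mult_Max:
  fixes p z :: "'a \<Rightarrow> real"
  assumes "finite A" and "\<And>j. j \<in> A \<Longrightarrow> 0 \<le> p j"
  shows "(\<Sum>j\<in>A. p j * z j) \<le> (\<Sum>j\<in>A. p j) * Max (z ` A)"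
proof -
  have "(\<Sum>j\<in>A. p j * z j) \<le> (\<Sum>j\<in>A. p j * Max (z ` A))"
    by (rule sum_mono) (use assms in \<open>auto intro: mult_left_mono\<close>)
  then show ?thesis by (simp add: sum_distrib_right)
qed

lemma sum_mult_Min_le_sum_mult:
  fixes p z :: "'a \<Rightarrow> real"
  assumes "finite A" and "\<And>j. j \<in> A \<Longrightarrow> 0 \<le> p j"
  shows "(\<Sum>j\<in>A. p j) * Min (z ` A) \<le> (\<Sum>j\<in>A. p j * z j)"
proof -
  have "(\<Sum>j\<in>A. p j * Min (z ` A)) \<le> (\<Sum>j\<in>A. p j * z j)"
    by (rule sum_mono) (use assms in \<open>auto intro: mult_left_mono\<close>)
  then show ?thesis by (simp add: sum_distrib_right)
qed

lemma weighted_sum_diff_le_excess_mass: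
  fixes p q \<mu> z :: "'a \<Rightarrow> real"
  assumes "finite A" and "sum p A = sum q A"
    and "\<And>j. j \<in> A \<Longrightarrow> \<mu> j \<le> p j" and "\<And>j. j \<in> A \<Longrightarrow> \<mu> j \<le> q j"
  shows "(\<Sum>j\<in>A. p j * z j) - (\<Sum>j\<in>A. q j * z j)
           \<le> (sum p A - sum \<mu> A) * (Max (z ` A) - Min (z ` A))"
proof -
  have split: "(\<Sum>j\<in>A. w j * z j) = (\<Sum>j\<in>A. (w j - \<mu> j) * z j) + (\<Sum>j\<in>A. \<mu> j * z j)"
    for w :: "'a \<Rightarrow> real"
    by (simp add: sum.distrib[symmetric] algebra_simps)
  have "(\<Sum>j\<in>A. (p j - \<mu> j) * z j) \<le> (sum p A - sum \<mu> A) * Max (z ` A)"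
    using sum_mult_le_sum_mult_Max[of A "\<lambda>j. p j - \<mu> j" z] assms
    by (simp add: sum_subtractf)
  moreover have "(sum q A - sum \<mu> A) * Min (z ` A) \<le> (\<Sum>j\<in>A. (q j - \<mu> j) * z j)"
    using sum_mult_Min_le_sum_mult[of A "\<lambda>j. q j - \<mu> j" z] assms
    by (simp add: sum_subtractf)
  ultimately show ?thesis
    using split[of p] split[of q] assms(2) by (simp add: right_diff_distrib)
qed

lemma mult_power_one_minus_le_one:
  fixes \<gamma> :: real
  assumes "0 \<le> \<gamma>" and "\<gamma> \<le> 1"
  shows "\<gamma> * (1 - \<gamma>) ^ (m - 1) * real m \<le> 1"
proof -
  have "\<gamma> * (1 - \<gamma>) ^ (m - 1) * real m = \<gamma> * (\<Sum>i<m. (1 - \<gamma>) ^ (m - 1))"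
    by simp
  also have "\<dots> \<le> \<gamma> * (\<Sum>i<m. (1 - \<gamma>) ^ i)"
    using assms by (intro mult_left_mono sum_mono power_decreasing) auto
  also have "\<dots> = 1 - (1 - \<gamma>) ^ m"
    using one_diff_power_eq[of "1 - \<gamma>" m] by simp
  also have "\<dots> \<le> 1"
    using assms by simp
  finally show ?thesis .
qed

lemma le_prod_of_stepwise_le:
  fixes D F :: "nat \<Rightarrow> real"
  assumes "\<And>s. 0 \<le> F s" and "\<And>s. D (Suc s) \<le> F (Suc s) * D s"
  shows "D k \<le> D 0 * (\<Prod>s\<in>{1..k}. F s)"
proof (induction k)
  case (Suc k)
  have "D (Suc k) \<le> F (Suc k) * (D 0 * (\<Prod>s\<in>{1..k}. F s))"
    using assms Suc.IH by (meson mult_left_mono order_trans)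
  also have "\<dots> = D 0 * (\<Prod>s\<in>{1..Suc k}. F s)"
    by (simp add: prod.nat_ivl_Suc' algebra_simps)
  finally show ?case .
qed simp

lemma batch_of_partition_on:
  assumes "partition_on A Bs" and "i \<in> A"
  shows "batch_of Bs i \<in> Bs" and "i \<in> batch_of Bs i"
proof -
  obtain S where S: "S \<in> Bs" "i \<in> S"
    using partition_onD1[OF assms(1)] assms(2) by auto
  have unique: "S' = S" if "S' \<in> Bs" "i \<in> S'" for S'
  proof (rule ccontr)
    assume "S' \<noteq> S"
    then have "S' \<inter> S = {}"
      using disjointD[OF partition_onD2[OF assms(1)] that(1) S(1)] by blast
    with S(2) that(2) show False by blast
  qed
  have "batch_of Bs i = S"
    unfolding batch_of_def by (rule the_equality) (use S unique in blast)+
  with S show "batch_of Bs i \<in> Bs" "i \<in> batch_of Bs i" by simp_all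
qed

lemma batch_of_batch_partitions:
  assumes "Bs \<in> batch_partitions N P" and "i \<in> {1..N}"
  shows "batch_of Bs i \<noteq> {}" and "batch_of Bs i \<subseteq> {1..N}"
proof -
  have part: "partition_on {1..N} Bs"
    using assms(1) by (simp add: batch_partitions_def)
  show "batch_of Bs i \<noteq> {}" "batch_of Bs i \<subseteq> {1..N}"
    using batch_of_partition_on[OF part assms(2)] partition_onD1[OF part] by auto
qed

lemma Gcount_le_card:
  assumes "i \<in> {1..N}" and "k \<in> {1..N}"
  shows "Gcount N B n0 n1 \<le> card {r\<in>{n0..<n1}. batch_of (B r) i = batch_of (B r) k}"
proof -
  let ?c = "\<lambda>p. card {r\<in>{n0..<n1}. batch_of (B r) (fst p) = batch_of (B r) (snd p)}"
  have "?c (i, k) \<in> ?c ` ({1..N} \<times> {1..N})"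
    using assms by blast
  then have "Min (?c ` ({1..N} \<times> {1..N})) \<le> ?c (i, k)"
    by (intro Min_le) auto
  then show ?thesis unfolding Gcount_def by simp
qed

lemma Gcount_le_length:
  assumes "N \<ge> 1"
  shows "Gcount N B n0 n1 \<le> n1 - n0"
proof -
  have "card {r\<in>{n0..<n1}. batch_of (B r) 1 = batch_of (B r) 1} \<le> card {n0..<n1}"
    by (rule card_mono) auto
  with Gcount_le_card[of 1 N 1 B n0 n1] assms show ?thesis
    by simp
qed

lemma abs_noise_le_norm_1inf:
  assumes "i \<in> {1..N}"
  shows "\<bar>eta r i l\<bar> \<le> norm_1inf N (Hmat eta l r)"
proof -
  have "\<bar>eta r i l\<bar> = \<bar>Hmat eta l r i i\<bar>"
    by (simp add: Hmat_def)
  also have "\<dots> \<le> (\<Sum>j\<in>{1..N}. \<bar>Hmat eta l r i j\<bar>)"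
    by (rule member_le_sum) (use assms in auto)
  also have "\<dots> \<le> norm_1inf N (Hmat eta l r)"
    unfolding norm_1inf_def by (rule Max_ge) (use assms in auto)
  finally show ?thesis .
qed


text \<open>One coordinate of the dynamics: \<open>v r i\<close> is \<open>x^{i,l}_r\<close>, \<open>a r i\<close> is the weight vector
  \<open>\<omega>_{[i]_r}(X_r)\<close>, \<open>e r i\<close> is \<open>\<eta>^{i,l}_r\<close> and \<open>h r\<close> bounds it, e.g. by \<open>\<parallel>H^l_r\<parallel>_{1,\<infinity>}\<close>.\<close>

locale noisy_consensus =
  fixes N :: nat and \<gamma> :: real
    and a :: "nat \<Rightarrow> nat \<Rightarrow> nat \<Rightarrow> real"
    and e :: "nat \<Rightarrow> nat \<Rightarrow> real"
    and h :: "nat \<Rightarrow> real"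
    and v :: "nat \<Rightarrow> nat \<Rightarrow> real"
  assumes N_ge_1: "N \<ge> 1" and \<gamma>_nonneg: "0 \<le> \<gamma>" and \<gamma>_le_1: "\<gamma> \<le> 1"
    and a_nonneg: "\<And>r i j. i \<in> {1..N} \<Longrightarrow> 0 \<le> a r i j"
    and a_row_sum: "\<And>r i. i \<in> {1..N} \<Longrightarrow> (\<Sum>j\<in>{1..N}. a r i j) = 1"
    and e_bound: "\<And>r i. i \<in> {1..N} \<Longrightarrow> \<bar>e r i\<bar> \<le> h r"
    and v_Suc: "\<And>r i. i \<in> {1..N} \<Longrightarrow>
       v (Suc r) i = (1 - \<gamma>) * v r i + \<gamma> * (\<Sum>k\<in>{1..N}. a r i k * v r k)
                     - (v r i - (\<Sum>k\<in>{1..N}. a r i k * v r k)) * e r i"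
begin

abbreviation avg :: "nat \<Rightarrow> (nat \<Rightarrow> real) \<Rightarrow> nat \<Rightarrow> real" where
  "avg r z i \<equiv> \<Sum>k\<in>{1..N}. a r i k * z k"

lemma h_nonneg: "0 \<le> h r"
  using e_bound[of 1 r] N_ge_1 by auto

lemma avg_bounds:
  assumes "i \<in> {1..N}"
  shows "Min (z ` {1..N}) \<le> avg r z i" and "avg r z i \<le> Max (z ` {1..N})"
  using sum_mult_Min_le_sum_mult[of "{1..N}" "a r i" z] sum_mult_le_sum_mult_Max[of "{1..N}" "a r i" z]
    a_nonneg[OF assms] a_row_sum[OF assms] by auto

lemma abs_avg_le:
  assumes "i \<in> {1..N}" and "\<And>k. k \<in> {1..N} \<Longrightarrow> \<bar>w k\<bar> \<le> E"
  shows "\<bar>avg r w i\<bar> \<le> E"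
proof -
  have "\<bar>avg r w i\<bar> \<le> (\<Sum>k\<in>{1..N}. \<bar>a r i k * w k\<bar>)"
    by (rule sum_abs)
  also have "\<dots> \<le> (\<Sum>k\<in>{1..N}. a r i k * E)"
    by (rule sum_mono) (use a_nonneg assms in \<open>auto simp: abs_mult intro: mult_left_mono\<close>)
  also have "\<dots> = E"
    using a_row_sum[OF assms(1)] by (simp add: sum_distrib_right[symmetric])
  finally show ?thesis .
qed

lemma lazy_avg_bounds:
  assumes "i \<in> {1..N}"
  shows "Min (v r ` {1..N}) \<le> (1 - \<gamma>) * v r i + \<gamma> * avg r (v r) i"
    and "(1 - \<gamma>) * v r i + \<gamma> * avg r (v r) i \<le> Max (v r ` {1..N})"
proof -
  let ?L = "Min (v r ` {1..N})" and ?M = "Max (v r ` {1..N})"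
  have v: "?L \<le> v r i" "v r i \<le> ?M"
    using assms by (auto intro!: Min_le Max_ge)
  note avg = avg_bounds[OF assms, where z="v r" and r=r]
  have "(1 - \<gamma>) * ?L + \<gamma> * ?L \<le> (1 - \<gamma>) * v r i + \<gamma> * avg r (v r) i"
    using v avg \<gamma>_nonneg \<gamma>_le_1 by (intro add_mono mult_left_mono) auto
  then show "?L \<le> (1 - \<gamma>) * v r i + \<gamma> * avg r (v r) i"
    by (simp add: algebra_simps)
  show "(1 - \<gamma>) * v r i + \<gamma> * avg r (v r) i \<le> ?M"
    using v avg \<gamma>_nonneg \<gamma>_le_1 by (intro convex_bound_le) auto
qed

lemma noise_perturbation_le:
  assumes "i \<in> {1..N}"
  shows "\<bar>v (Suc r) i - ((1 - \<gamma>) * v r i + \<gamma> * avg r (v r) i)\<bar> \<le> diam N (v r) * h r"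
proof -
  have "Min (v r ` {1..N}) \<le> v r i" "v r i \<le> Max (v r ` {1..N})"
    using assms by (auto intro!: Min_le Max_ge)
  with avg_bounds[OF assms, where z="v r" and r=r] have "\<bar>v r i - avg r (v r) i\<bar> \<le> diam N (v r)"
    unfolding diam_def by linarith
  then have "\<bar>v r i - avg r (v r) i\<bar> * \<bar>e r i\<bar> \<le> diam N (v r) * h r"
    using e_bound[OF assms] by (intro mult_mono) auto
  then show ?thesis
    using v_Suc[OF assms] by (simp add: abs_mult)
qed

lemma diam_Suc_le: "diam N (v (Suc r)) \<le> (1 + 2 * h r) * diam N (v r)"
proof (rule diam_le[OF N_ge_1])
  fix i k assume i: "i \<in> {1..N}" and k: "k \<in> {1..N}"
  let ?D = "diam N (v r)"
  have "v (Suc r) i \<le> Max (v r ` {1..N}) + ?D * h r"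
    using lazy_avg_bounds(2)[OF i, of r] noise_perturbation_le[OF i, of r]
    unfolding abs_le_iff by linarith
  moreover have "Min (v r ` {1..N}) - ?D * h r \<le> v (Suc r) k"
    using lazy_avg_bounds(1)[OF k, of r] noise_perturbation_le[OF k, of r]
    unfolding abs_le_iff by linarith
  ultimately show "v (Suc r) i - v (Suc r) k \<le> (1 + 2 * h r) * ?D"
    unfolding diam_def by (simp add: algebra_simps)
qed

definition noise_growth :: "nat \<Rightarrow> nat \<Rightarrow> real" where
  "noise_growth n0 n1 = (\<Prod>r\<in>{n0..<n1}. 1 + 2 * h r)"

lemma noise_growth_ge_1: "1 \<le> noise_growth n0 n1"
  unfolding noise_growth_def by (rule prod_ge_1) (use h_nonneg in auto)

lemma noise_growth_Suc:
  "noise_growth n0 (Suc (n0 + t)) = noise_growth n0 (n0 + t) * (1 + 2 * h (n0 + t))"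
  by (simp add: noise_growth_def)

lemma diam_le_noise_growth: "diam N (v (n0 + t)) \<le> noise_growth n0 (n0 + t) * diam N (v n0)"
proof (induction t)
  case (Suc t)
  have "diam N (v (n0 + Suc t)) \<le> (1 + 2 * h (n0 + t)) * diam N (v (n0 + t))"
    using diam_Suc_le[of "n0 + t"] by simp
  also have "\<dots> \<le> (1 + 2 * h (n0 + t)) * (noise_growth n0 (n0 + t) * diam N (v n0))"
    by (rule mult_left_mono) (use Suc h_nonneg[of "n0 + t"] in auto)
  finally show ?case
    by (simp add: noise_growth_Suc algebra_simps)
qed (simp add: noise_growth_def)

primrec propagator :: "nat \<Rightarrow> nat \<Rightarrow> nat \<Rightarrow> nat \<Rightarrow> real" where
  "propagator n0 0 = (\<lambda>i j. if i = j then 1 else 0)"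
| "propagator n0 (Suc t) =
     (\<lambda>i j. (1 - \<gamma>) * propagator n0 t i j + \<gamma> * avg (n0 + t) (\<lambda>k. propagator n0 t k j) i)"

lemma propagator_nonneg: "i \<in> {1..N} \<Longrightarrow> 0 \<le> propagator n0 t i j"
proof (induction t arbitrary: i)
  case (Suc t)
  then have "0 \<le> avg (n0 + t) (\<lambda>k. propagator n0 t k j) i"
    using a_nonneg by (intro sum_nonneg) auto
  with Suc show ?case
    using \<gamma>_nonneg \<gamma>_le_1 by simp
qed simp

lemma propagator_row_sum: "i \<in> {1..N} \<Longrightarrow> (\<Sum>j\<in>{1..N}. propagator n0 t i j) = 1"
proof (induction t arbitrary: i)
  case (Suc t)
  have "(\<Sum>j\<in>{1..N}. avg (n0 + t) (\<lambda>k. propagator n0 t k j) i)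
      = (\<Sum>k\<in>{1..N}. a (n0 + t) i k * (\<Sum>j\<in>{1..N}. propagator n0 t k j))"
    by (subst sum.swap) (simp add: sum_distrib_left)
  also have "\<dots> = 1"
    using Suc.IH a_row_sum[OF Suc.prems] by simp
  finally show ?case
    using Suc by (simp add: sum.distrib sum_distrib_left[symmetric])
qed simp

text \<open>The paths that are lazy at every step but one, where they average at time \<open>r\<close>,
  contribute \<open>\<gamma> (1 - \<gamma>)^(t-1) a r i j\<close>.\<close>

lemma propagator_lower_bound:
  assumes "i \<in> {1..N}" and "j \<in> {1..N}"
  shows "(1 - \<gamma>) ^ t * (if i = j then 1 else 0) + \<gamma> * (1 - \<gamma>) ^ (t - 1) * (\<Sum>r\<in>{n0..<n0 + t}. a r i j)
           \<le> propagator n0 t i j"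
  using assms(1)
proof (induction t arbitrary: i)
  case (Suc t)
  let ?\<delta> = "if i = j then 1 else 0 :: real" and ?S = "\<Sum>r\<in>{n0..<n0 + t}. a r i j"
  have "0 \<le> \<gamma> * (1 - \<gamma>) ^ (t - 1) * (\<Sum>r\<in>{n0..<n0 + t}. a r j j)"
    using \<gamma>_nonneg \<gamma>_le_1 a_nonneg[OF assms(2)] by (intro mult_nonneg_nonneg sum_nonneg) auto
  with Suc.IH[OF assms(2)] have "(1 - \<gamma>) ^ t \<le> propagator n0 t j j"
    by simp
  then have "\<gamma> * (a (n0 + t) i j * (1 - \<gamma>) ^ t) \<le> \<gamma> * (a (n0 + t) i j * propagator n0 t j j)"
    using \<gamma>_nonneg a_nonneg[OF Suc.prems] by (intro mult_left_mono) auto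
  also have "\<dots> \<le> \<gamma> * avg (n0 + t) (\<lambda>k. propagator n0 t k j) i"
    using assms(2) a_nonneg[OF Suc.prems] propagator_nonneg \<gamma>_nonneg
    by (intro mult_left_mono member_le_sum) auto
  finally have new: "\<gamma> * (a (n0 + t) i j * (1 - \<gamma>) ^ t) \<le> \<gamma> * avg (n0 + t) (\<lambda>k. propagator n0 t k j) i" .
  have old: "(1 - \<gamma>) * ((1 - \<gamma>) ^ t * ?\<delta> + \<gamma> * (1 - \<gamma>) ^ (t - 1) * ?S) \<le> (1 - \<gamma>) * propagator n0 t i j"
    using Suc.IH[OF Suc.prems] \<gamma>_le_1 by (intro mult_left_mono) auto
  have "(1 - \<gamma>) ^ Suc t * ?\<delta> + \<gamma> * (1 - \<gamma>) ^ (Suc t - 1) * (\<Sum>r\<in>{n0..<n0 + Suc t}. a r i j)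
      = (1 - \<gamma>) * ((1 - \<gamma>) ^ t * ?\<delta> + \<gamma> * (1 - \<gamma>) ^ (t - 1) * ?S) + \<gamma> * (a (n0 + t) i j * (1 - \<gamma>) ^ t)"
    by (cases t) (simp_all add: algebra_simps)
  also have "\<dots> \<le> propagator n0 (Suc t) i j"
    using old new by simp
  finally show ?case .
qed simp

definition noiseless :: "nat \<Rightarrow> nat \<Rightarrow> nat \<Rightarrow> real" where
  "noiseless n0 t i = (\<Sum>j\<in>{1..N}. propagator n0 t i j * v n0 j)"

lemma noiseless_0:
  assumes "i \<in> {1..N}"
  shows "noiseless n0 0 i = v n0 i"
proof -
  have "noiseless n0 0 i = (\<Sum>j\<in>{1..N}. if j = i then v n0 j else 0)"
    unfolding noiseless_def by (rule sum.cong) auto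
  with assms show ?thesis
    by simp
qed

lemma noiseless_Suc:
  "noiseless n0 (Suc t) i = (1 - \<gamma>) * noiseless n0 t i + \<gamma> * avg (n0 + t) (noiseless n0 t) i"
proof -
  let ?q = "\<lambda>j. avg (n0 + t) (\<lambda>k. propagator n0 t k j) i"
  have "avg (n0 + t) (noiseless n0 t) i
      = (\<Sum>k\<in>{1..N}. \<Sum>j\<in>{1..N}. a (n0 + t) i k * propagator n0 t k j * v n0 j)"
    unfolding noiseless_def by (simp add: sum_distrib_left mult.assoc)
  also have "\<dots> = (\<Sum>j\<in>{1..N}. ?q j * v n0 j)"
    by (subst sum.swap) (simp add: sum_distrib_right)
  finally have avg_noiseless: "avg (n0 + t) (noiseless n0 t) i = (\<Sum>j\<in>{1..N}. ?q j * v n0 j)" .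
  have "noiseless n0 (Suc t) i
      = (\<Sum>j\<in>{1..N}. (1 - \<gamma>) * (propagator n0 t i j * v n0 j) + \<gamma> * (?q j * v n0 j))"
    unfolding noiseless_def by (simp add: distrib_right mult.assoc)
  also have "\<dots> = (1 - \<gamma>) * noiseless n0 t i + \<gamma> * (\<Sum>j\<in>{1..N}. ?q j * v n0 j)"
    unfolding noiseless_def by (simp only: sum.distrib sum_distrib_left)
  finally show ?thesis
    unfolding avg_noiseless .
qed

lemma noiseless_diff_le:
  assumes i: "i \<in> {1..N}" and k: "k \<in> {1..N}"
    and R: "R \<subseteq> {n0..<n0 + t}" and agree: "\<And>r. r \<in> R \<Longrightarrow> a r i = a r k"
  shows "noiseless n0 t i - noiseless n0 t k
           \<le> (1 - \<gamma> * (1 - \<gamma>) ^ (t - 1) * real (card R)) * diam N (v n0)"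
proof -
  define \<mu> where "\<mu> j = \<gamma> * (1 - \<gamma>) ^ (t - 1) * (\<Sum>r\<in>R. a r i j)" for j
  have below: "\<mu> j \<le> propagator n0 t i' j"
    if i': "i' \<in> {1..N}" and j: "j \<in> {1..N}" and "\<forall>r\<in>R. a r i' = a r i" for i' j
  proof -
    have "(\<Sum>r\<in>R. a r i j) = (\<Sum>r\<in>R. a r i' j)"
      using that(3) by simp
    also have "\<dots> \<le> (\<Sum>r\<in>{n0..<n0 + t}. a r i' j)"
      using R a_nonneg[OF i'] by (intro sum_mono2) auto
    finally have "(\<Sum>r\<in>R. a r i j) \<le> (\<Sum>r\<in>{n0..<n0 + t}. a r i' j)" .
    then have "\<mu> j \<le> \<gamma> * (1 - \<gamma>) ^ (t - 1) * (\<Sum>r\<in>{n0..<n0 + t}. a r i' j)"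
      unfolding \<mu>_def using \<gamma>_nonneg \<gamma>_le_1 by (intro mult_left_mono) auto
    moreover have "0 \<le> (1 - \<gamma>) ^ t * (if i' = j then 1 else 0)"
      using \<gamma>_le_1 by simp
    ultimately show ?thesis
      using propagator_lower_bound[OF i' j, of t n0] by linarith
  qed
  have mass: "(\<Sum>j\<in>{1..N}. \<mu> j) = \<gamma> * (1 - \<gamma>) ^ (t - 1) * real (card R)"
  proof -
    have "(\<Sum>j\<in>{1..N}. \<Sum>r\<in>R. a r i j) = (\<Sum>r\<in>R. \<Sum>j\<in>{1..N}. a r i j)"
      by (rule sum.swap)
    then show ?thesis
      unfolding \<mu>_def using a_row_sum[OF i] by (simp add: sum_distrib_left[symmetric])
  qed
  have "noiseless n0 t i - noiseless n0 t k
      \<le> ((\<Sum>j\<in>{1..N}. propagator n0 t i j) - (\<Sum>j\<in>{1..N}. \<mu> j)) * diam N (v n0)"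
    unfolding noiseless_def diam_def
    using below[OF i] below[OF k] agree propagator_row_sum[OF i] propagator_row_sum[OF k]
    by (intro weighted_sum_diff_le_excess_mass) auto
  then show ?thesis
    using propagator_row_sum[OF i] mass by simp
qed

lemma noiseless_error:
  assumes "i \<in> {1..N}"
  shows "\<bar>v (n0 + t) i - noiseless n0 t i\<bar> \<le> (noise_growth n0 (n0 + t) - 1) * diam N (v n0)"
  using assms
proof (induction t arbitrary: i)
  case (Suc t)
  let ?r = "n0 + t" and ?E = "(noise_growth n0 (n0 + t) - 1) * diam N (v n0)"
  let ?d = "\<lambda>k. v ?r k - noiseless n0 t k"
  let ?X = "(1 - \<gamma>) * ?d i + \<gamma> * avg ?r ?d i"
  let ?Y = "v (Suc ?r) i - ((1 - \<gamma>) * v ?r i + \<gamma> * avg ?r (v ?r) i)"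
  let ?G = "noise_growth n0 ?r * diam N (v n0) * h ?r"
  have "\<bar>(1 - \<gamma>) * ?d i\<bar> \<le> (1 - \<gamma>) * ?E"
    using Suc.IH[OF Suc.prems] \<gamma>_le_1 by (simp add: abs_mult mult_left_mono)
  moreover have "\<bar>\<gamma> * avg ?r ?d i\<bar> \<le> \<gamma> * ?E"
    using abs_avg_le[OF Suc.prems, of ?d ?E ?r] Suc.IH \<gamma>_nonneg by (simp add: abs_mult mult_left_mono)
  ultimately have X: "\<bar>?X\<bar> \<le> ?E"
    using abs_triangle_ineq[of "(1 - \<gamma>) * ?d i" "\<gamma> * avg ?r ?d i"] by (simp add: algebra_simps)
  have "diam N (v ?r) * h ?r \<le> ?G"
    using diam_le_noise_growth[of n0 t] h_nonneg by (rule mult_right_mono)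
  then have Y: "\<bar>?Y\<bar> \<le> ?G"
    using noise_perturbation_le[OF Suc.prems, of ?r] by linarith
  have avg_d: "avg ?r ?d i = avg ?r (v ?r) i - avg ?r (noiseless n0 t) i"
    by (simp add: right_diff_distrib sum_subtractf)
  have "v (n0 + Suc t) i - noiseless n0 (Suc t) i = ?X + ?Y"
    unfolding avg_d noiseless_Suc by (simp add: algebra_simps)
  moreover have "0 \<le> ?G"
    using noise_growth_ge_1[of n0 ?r] diam_nonneg[OF N_ge_1] h_nonneg[of ?r] by simp
  moreover have "(noise_growth n0 (n0 + Suc t) - 1) * diam N (v n0) = ?E + 2 * ?G"
    by (simp add: noise_growth_Suc algebra_simps)
  ultimately show ?case
    using X Y abs_triangle_ineq[of ?X ?Y] by linarith
qed (simp add: noiseless_0 noise_growth_def)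

lemma diam_block_le:
  assumes "\<And>i k. i \<in> {1..N} \<Longrightarrow> k \<in> {1..N} \<Longrightarrow> g \<le> card {r\<in>{n0..<n0 + t}. a r i = a r k}"
  shows "diam N (v (n0 + t))
           \<le> (1 - \<gamma> * (1 - \<gamma>) ^ (t - 1) * real g + 2 * (noise_growth n0 (n0 + t) - 1)) * diam N (v n0)"
proof (rule diam_le[OF N_ge_1])
  fix i k assume i: "i \<in> {1..N}" and k: "k \<in> {1..N}"
  let ?R = "{r\<in>{n0..<n0 + t}. a r i = a r k}" and ?c = "\<gamma> * (1 - \<gamma>) ^ (t - 1)"
  let ?D = "diam N (v n0)" and ?E = "(noise_growth n0 (n0 + t) - 1) * diam N (v n0)"
  have "noiseless n0 t i - noiseless n0 t k \<le> (1 - ?c * real (card ?R)) * ?D"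
    by (rule noiseless_diff_le[OF i k]) auto
  then have "v (n0 + t) i - v (n0 + t) k \<le> (1 - ?c * real (card ?R)) * ?D + 2 * ?E"
    using noiseless_error[OF i, of n0 t] noiseless_error[OF k, of n0 t]
    unfolding abs_le_iff by linarith
  moreover have "?c * real g * ?D \<le> ?c * real (card ?R) * ?D"
    using assms[OF i k] \<gamma>_nonneg \<gamma>_le_1 diam_nonneg[OF N_ge_1]
    by (intro mult_right_mono mult_left_mono) auto
  ultimately show "v (n0 + t) i - v (n0 + t) k
      \<le> (1 - ?c * real g + 2 * (noise_growth n0 (n0 + t) - 1)) * ?D"
    by (simp add: algebra_simps)
qed

end

locale batch_consensus = noisy_consensus +
  fixes B :: "nat \<Rightarrow> nat set set"
  assumes batch_determines_weights: "\<And>r i k. batch_of (B r) i = batch_of (B r) k \<Longrightarrow> a r i = a r k"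
begin

lemma Gcount_le_card_agree:
  assumes "i \<in> {1..N}" and "k \<in> {1..N}"
  shows "Gcount N B n0 n1 \<le> card {r\<in>{n0..<n1}. a r i = a r k}"
proof -
  have "{r\<in>{n0..<n1}. batch_of (B r) i = batch_of (B r) k} \<subseteq> {r\<in>{n0..<n1}. a r i = a r k}"
    using batch_determines_weights by blast
  then have "card {r\<in>{n0..<n1}. batch_of (B r) i = batch_of (B r) k} \<le> card {r\<in>{n0..<n1}. a r i = a r k}"
    by (intro card_mono) simp_all
  with Gcount_le_card[OF assms] show ?thesis
    by (rule order_trans)
qed

lemma diam_le_blockwise:
  assumes "m \<ge> 1" and "k * m \<le> n" and "n < (k + 1) * m"
  shows "diam N (v n) \<le> diam N (v 0) * (1 + 2 * (noise_growth (k * m) n - 1))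
    * (\<Prod>s\<in>{1..k}. 1 - \<gamma> * (1 - \<gamma>) ^ (m - 1) * real (Gcount N B ((s - 1) * m) (s * m))
                      + 2 * (noise_growth ((s - 1) * m) (s * m) - 1))"
    (is "_ \<le> _ * ?tail * (\<Prod>s\<in>{1..k}. ?F s)")
proof -
  have F_nonneg: "0 \<le> ?F s" for s
  proof -
    have "real (Gcount N B ((s - 1) * m) (s * m)) \<le> real m"
      using Gcount_le_length[OF N_ge_1, of B "(s - 1) * m" "s * m"] by (cases s) auto
    then have "\<gamma> * (1 - \<gamma>) ^ (m - 1) * real (Gcount N B ((s - 1) * m) (s * m))
        \<le> \<gamma> * (1 - \<gamma>) ^ (m - 1) * real m"
      using \<gamma>_nonneg \<gamma>_le_1 by (intro mult_left_mono) auto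
    then have "\<gamma> * (1 - \<gamma>) ^ (m - 1) * real (Gcount N B ((s - 1) * m) (s * m)) \<le> 1"
      using mult_power_one_minus_le_one[OF \<gamma>_nonneg \<gamma>_le_1, of m] by linarith
    with noise_growth_ge_1[of "(s - 1) * m" "s * m"] show ?thesis
      by simp
  qed
  have "diam N (v (Suc s * m)) \<le> ?F (Suc s) * diam N (v (s * m))" for s
    using diam_block_le[of "Gcount N B (s * m) (s * m + m)" "s * m" m]
      Gcount_le_card_agree by (simp add: add.commute)
  then have blocks: "diam N (v (k * m)) \<le> diam N (v 0) * (\<Prod>s\<in>{1..k}. ?F s)"
    using le_prod_of_stepwise_le[of ?F "\<lambda>s. diam N (v (s * m))"] F_nonneg by simp
  have "diam N (v n) \<le> ?tail * diam N (v (k * m))"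
    using diam_block_le[of 0 "k * m" "n - k * m"] assms(2) by simp
  also have "\<dots> \<le> ?tail * (diam N (v 0) * (\<Prod>s\<in>{1..k}. ?F s))"
    using blocks noise_growth_ge_1[of "k * m" n] by (intro mult_left_mono) auto
  finally show ?thesis
    by (simp add: algebra_simps)
qed

end

theorem lemma4p4:
  fixes N d P :: nat and \<gamma> :: real
    and \<omega> :: "nat set \<Rightarrow> nat \<Rightarrow> (nat \<Rightarrow> nat \<Rightarrow> real) \<Rightarrow> real"
    and B :: "nat \<Rightarrow> nat set set"
    and eta :: "nat \<Rightarrow> nat \<Rightarrow> nat \<Rightarrow> real"
    and x :: "nat \<Rightarrow> nat \<Rightarrow> nat \<Rightarrow> real"
    and m k :: nat
  assumes "N \<ge> 2" and "d \<ge> 1" and "P \<ge> 2" and "0 < \<gamma>" and "\<gamma> < 1"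
    and \<omega>_nonneg: "\<And>S j X. S \<noteq> {} \<Longrightarrow> S \<subseteq> {1..N} \<Longrightarrow> \<omega> S j X \<ge> 0"
    and \<omega>_sum: "\<And>S X. S \<noteq> {} \<Longrightarrow> S \<subseteq> {1..N} \<Longrightarrow> (\<Sum>j\<in>S. \<omega> S j X) = 1"
    and \<omega>_out: "\<And>S j X. S \<noteq> {} \<Longrightarrow> S \<subseteq> {1..N} \<Longrightarrow> j \<notin> S \<Longrightarrow> \<omega> S j X = 0"
    and batches: "\<And>n. B n \<in> batch_partitions N P"
    and dyn: "\<And>n i l. i \<in> {1..N} \<Longrightarrow> l \<in> {1..d} \<Longrightarrow>
       x (Suc n) i l = x n i l
         - \<gamma> * (x n i l - (\<Sum>j\<in>{1..N}. \<omega> (batch_of (B n) i) j (x n) * x n j l))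
         - (x n i l - (\<Sum>j\<in>{1..N}. \<omega> (batch_of (B n) i) j (x n) * x n j l)) * eta n i l"
    and "m \<ge> 1"
  shows "\<forall>n l. k * m \<le> n \<and> n < (k + 1) * m \<and> l \<in> {1..d} \<longrightarrow>
     diam N (\<lambda>i. x n i l)
       \<le> diam N (\<lambda>i. x 0 i l) * (1 + Hcoef N eta l (k * m) n)
         * (\<Prod>s\<in>{1..k}. 1 - \<gamma> * (1 - \<gamma>) ^ (m - 1) * real (Gcount N B ((s - 1) * m) (s * m))
                           + Hcoef N eta l ((s - 1) * m) (s * m))"
proof (intro allI impI)
  fix n l assume n: "k * m \<le> n \<and> n < (k + 1) * m \<and> l \<in> {1..d}"
  then have l: "l \<in> {1..d}" by simp
  note batch = batch_of_batch_partitions[OF batches]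
  interpret batch_consensus N \<gamma> "\<lambda>r i j. \<omega> (batch_of (B r) i) j (x r)" "\<lambda>r i. eta r i l"
    "\<lambda>r. norm_1inf N (Hmat eta l r)" "\<lambda>r i. x r i l" B
  proof unfold_locales
    show "1 \<le> N" "0 \<le> \<gamma>" "\<gamma> \<le> 1"
      using \<open>N \<ge> 2\<close> \<open>0 < \<gamma>\<close> \<open>\<gamma> < 1\<close> by simp_all
    show "(\<lambda>j. \<omega> (batch_of (B r) i) j (x r)) = (\<lambda>j. \<omega> (batch_of (B r) k) j (x r))"
      if "batch_of (B r) i = batch_of (B r) k" for r i k
      using that by simp
  next
    fix r i j assume i: "i \<in> {1..N}"
    show "0 \<le> \<omega> (batch_of (B r) i) j (x r)"
      by (rule \<omega>_nonneg[OF batch[OF i]])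
    have "(\<Sum>j\<in>batch_of (B r) i. \<omega> (batch_of (B r) i) j (x r)) = (\<Sum>j\<in>{1..N}. \<omega> (batch_of (B r) i) j (x r))"
      by (rule sum.mono_neutral_left) (use \<omega>_out[OF batch[OF i]] batch[OF i] in auto)
    with \<omega>_sum[OF batch[OF i]] show "(\<Sum>j\<in>{1..N}. \<omega> (batch_of (B r) i) j (x r)) = 1"
      by simp
    show "\<bar>eta r i l\<bar> \<le> norm_1inf N (Hmat eta l r)"
      by (rule abs_noise_le_norm_1inf[OF i])
    show "x (Suc r) i l = (1 - \<gamma>) * x r i l + \<gamma> * (\<Sum>k\<in>{1..N}. \<omega> (batch_of (B r) i) k (x r) * x r k l)
        - (x r i l - (\<Sum>k\<in>{1..N}. \<omega> (batch_of (B r) i) k (x r) * x r k l)) * eta r i l"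
      using dyn[OF i l, of r] by (simp add: algebra_simps)
  qed
  have "Hcoef N eta l = (\<lambda>n0 n1. 2 * (noise_growth n0 n1 - 1))"
    by (simp add: fun_eq_iff Hcoef_def noise_growth_def)
  then show "diam N (\<lambda>i. x n i l)
       \<le> diam N (\<lambda>i. x 0 i l) * (1 + Hcoef N eta l (k * m) n)
         * (\<Prod>s\<in>{1..k}. 1 - \<gamma> * (1 - \<gamma>) ^ (m - 1) * real (Gcount N B ((s - 1) * m) (s * m))
                           + Hcoef N eta l ((s - 1) * m) (s * m))"
    using diam_le_blockwise[OF \<open>m \<ge> 1\<close>] n by simp
qed

end
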